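(* For any two graphs $G_1$ and $G_2$, $\chi_L(G_1+G_2)=\chi_{L_2}(G_1)+\chi_{L_2}(G_2)$.
   Context: All graphs are finite and simple (not necessarily connected for $G_1,G_2$). A proper $k$-coloring of $G$ is a map $f$ from $V(G)$ onto $[k]=\{1,\dots,k\}$ with adjacent vertices receiving different colors; for $S\subseteq V(G)$, $f(S)=\{f(u):u\in S\}$, and $N_G(u)$ is the set of neighbors of $u$. A proper $k$-coloring $f$ is a neighbor locating coloring if for any two distinct vertices $u,v$ with $f(u)=f(v)$ we have $f(N_G(u))\ne f(N_G(v))$; the neighbor locating chromatic number $\chi_{L_2}(G)$ is the minimum number of colors in a neighbor locating coloring of $G$. For a connected graph $G$ with proper $k$-coloring $f$ and color classes $V_i=f^{-1}(i)$, the color code of $v$ is $(d(v,V_1),\dots,d(v,V_k))$, where $d(v,S)=\min_{x\in S}d(v,x)$; $f$ is a locating coloring if distinct vertices have distinct color codes, and $\chi_L(G)$ is the minimum number of colors in a locating coloring. The join $G_1+G_2$ is the disjoint union of $G_1$ and $G_2$ together with all edges joining a vertex of $G_1$ to a vertex of $G_2$. *)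

theory Defs
  imports Main
begin

definition simple_graph :: "'a set \<Rightarrow> ('a \<Rightarrow> 'a \<Rightarrow> bool) \<Rightarrow> bool" where
  "simple_graph V E \<longleftrightarrow> finite V \<and> V \<noteq> {} \<and>
     (\<forall>u v. E u v \<longrightarrow> u \<in> V \<and> v \<in> V) \<and>
     (\<forall>u v. E u v \<longrightarrow> E v u) \<and> (\<forall>u. \<not> E u u)"

definition nbhd :: "'a set \<Rightarrow> ('a \<Rightarrow> 'a \<Rightarrow> bool) \<Rightarrow> 'a \<Rightarrow> 'a set" where
  "nbhd V E u = {w \<in> V. E u w}"

definition proper_coloring :: "'a set \<Rightarrow> ('a \<Rightarrow> 'a \<Rightarrow> bool) \<Rightarrow> nat \<Rightarrow> ('a \<Rightarrow> nat) \<Rightarrow> bool" where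
  "proper_coloring V E k f \<longleftrightarrow> f ` V = {1..k} \<and>
     (\<forall>u\<in>V. \<forall>v\<in>V. E u v \<longrightarrow> f u \<noteq> f v)"

definition neighbor_locating_coloring ::
  "'a set \<Rightarrow> ('a \<Rightarrow> 'a \<Rightarrow> bool) \<Rightarrow> nat \<Rightarrow> ('a \<Rightarrow> nat) \<Rightarrow> bool" where
  "neighbor_locating_coloring V E k f \<longleftrightarrow> proper_coloring V E k f \<and>
     (\<forall>u\<in>V. \<forall>v\<in>V. u \<noteq> v \<and> f u = f v \<longrightarrow> f ` nbhd V E u \<noteq> f ` nbhd V E v)"

definition chi_L2 :: "'a set \<Rightarrow> ('a \<Rightarrow> 'a \<Rightarrow> bool) \<Rightarrow> nat" where
  "chi_L2 V E = (LEAST k. \<exists>f. neighbor_locating_coloring V E k f)"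

definition edge_rel :: "'a set \<Rightarrow> ('a \<Rightarrow> 'a \<Rightarrow> bool) \<Rightarrow> ('a \<times> 'a) set" where
  "edge_rel V E = {(u, v). u \<in> V \<and> v \<in> V \<and> E u v}"

definition connected_graph :: "'a set \<Rightarrow> ('a \<Rightarrow> 'a \<Rightarrow> bool) \<Rightarrow> bool" where
  "connected_graph V E \<longleftrightarrow> (\<forall>u\<in>V. \<forall>v\<in>V. \<exists>n. (u, v) \<in> edge_rel V E ^^ n)"

definition graph_dist :: "'a set \<Rightarrow> ('a \<Rightarrow> 'a \<Rightarrow> bool) \<Rightarrow> 'a \<Rightarrow> 'a \<Rightarrow> nat" where
  "graph_dist V E u v = (LEAST n. (u, v) \<in> edge_rel V E ^^ n)"

definition set_dist :: "'a set \<Rightarrow> ('a \<Rightarrow> 'a \<Rightarrow> bool) \<Rightarrow> 'a \<Rightarrow> 'a set \<Rightarrow> nat" where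
  "set_dist V E v S = Min (graph_dist V E v ` S)"

definition color_code :: "'a set \<Rightarrow> ('a \<Rightarrow> 'a \<Rightarrow> bool) \<Rightarrow> nat \<Rightarrow> ('a \<Rightarrow> nat) \<Rightarrow> 'a \<Rightarrow> nat list" where
  "color_code V E k f v = map (\<lambda>i. set_dist V E v {x \<in> V. f x = i}) [1..<k+1]"

definition locating_coloring :: "'a set \<Rightarrow> ('a \<Rightarrow> 'a \<Rightarrow> bool) \<Rightarrow> nat \<Rightarrow> ('a \<Rightarrow> nat) \<Rightarrow> bool" where
  "locating_coloring V E k f \<longleftrightarrow> proper_coloring V E k f \<and>
     (\<forall>u\<in>V. \<forall>v\<in>V. u \<noteq> v \<longrightarrow> color_code V E k f u \<noteq> color_code V E k f v)"

text \<open>Only meaningful for connected graphs.\<close>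
definition chi_L :: "'a set \<Rightarrow> ('a \<Rightarrow> 'a \<Rightarrow> bool) \<Rightarrow> nat" where
  "chi_L V E = (LEAST k. \<exists>f. locating_coloring V E k f)"

definition join_vertices :: "'a set \<Rightarrow> 'b set \<Rightarrow> ('a + 'b) set" where
  "join_vertices V1 V2 = Inl ` V1 \<union> Inr ` V2"

fun join_edges :: "'a set \<Rightarrow> ('a \<Rightarrow> 'a \<Rightarrow> bool) \<Rightarrow> 'b set \<Rightarrow> ('b \<Rightarrow> 'b \<Rightarrow> bool)
    \<Rightarrow> ('a + 'b) \<Rightarrow> ('a + 'b) \<Rightarrow> bool" where
  "join_edges V1 E1 V2 E2 (Inl a) (Inl b) = E1 a b"
| "join_edges V1 E1 V2 E2 (Inr a) (Inr b) = E2 a b"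
| "join_edges V1 E1 V2 E2 (Inl a) (Inr b) = (a \<in> V1 \<and> b \<in> V2)"
| "join_edges V1 E1 V2 E2 (Inr a) (Inl b) = (a \<in> V2 \<and> b \<in> V1)"

end

theory Submission
  imports Defs
begin

text \<open>Every vertex of \<open>G\<^sub>1\<close> is adjacent to every vertex of \<open>G\<^sub>2\<close> in the join, so the join
has diameter at most 2. In such a graph the distance from a vertex \<open>w\<close> to a colour class is 0,
1 or 2 according as the class contains \<open>w\<close>, meets its neighbourhood, or neither; hence the colour
code of \<open>w\<close> carries exactly the information \<open>(f w, f ` N(w))\<close> and locating colourings of the
join are its neighbour-locating colourings. A neighbour-locating colouring of the join uses
disjoint palettes on the two sides, and since each vertex sees the whole other side, it restricts
to neighbour-locating colourings of \<open>G\<^sub>1\<close> and \<open>G\<^sub>2\<close>; conversely, colourings of the two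
sides with disjoint palettes combine to one of the join.\<close>

definition diameter_le_2 :: "'a set \<Rightarrow> ('a \<Rightarrow> 'a \<Rightarrow> bool) \<Rightarrow> bool" where
  "diameter_le_2 V E \<longleftrightarrow>
     (\<forall>x\<in>V. \<forall>y\<in>V. x \<noteq> y \<and> \<not> E x y \<longrightarrow> (\<exists>z\<in>V. E x z \<and> E z y))"

lemma graph_dist_diameter_le_2:
  assumes diam: "diameter_le_2 V E" and x: "x \<in> V" and y: "y \<in> V"
  shows "graph_dist V E x y = (if x = y then 0 else if E x y then 1 else 2)"
proof -
  let ?R = "edge_rel V E"
  define d :: nat where "d = (if x = y then 0 else if E x y then 1 else 2)"
  have walk: "(x, y) \<in> ?R ^^ d"
  proof (cases "x = y \<or> E x y")
    case True
    then show ?thesis using x y by (auto simp: d_def edge_rel_def)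
  next
    case False
    then obtain z where "z \<in> V" "E x z" "E z y" using diam x y by (auto simp: diameter_le_2_def)
    then show ?thesis using False x y by (auto simp: d_def edge_rel_def numeral_2_eq_2 relpow_Suc_I)
  qed
  have no_shorter: "(x, y) \<notin> ?R ^^ n" if "n < d" for n
    using that by (cases n) (auto simp: d_def edge_rel_def split: if_splits)
  have "(LEAST n. (x, y) \<in> ?R ^^ n) = d"
    by (rule Least_equality) (use walk no_shorter not_less in blast)+
  then show ?thesis by (simp add: graph_dist_def d_def)
qed

lemma set_dist_diameter_le_2:
  assumes diam: "diameter_le_2 V E" and "finite V" and v: "v \<in> V" and S: "S \<subseteq> V" "S \<noteq> {}"
  shows "set_dist V E v S = (if v \<in> S then 0 else if \<exists>w\<in>S. E v w then 1 else 2)"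
proof -
  have "graph_dist V E v ` S = (\<lambda>w. if v = w then 0 else if E v w then 1 else 2) ` S"
    using graph_dist_diameter_le_2[OF diam v] S by (intro image_cong) auto
  moreover have "finite S" using \<open>finite V\<close> S finite_subset by blast
  ultimately show ?thesis unfolding set_dist_def
    by (intro Min_eqI) (use S in \<open>auto split: if_splits\<close>)
qed

text \<open>The colour code of \<open>w\<close> at colour \<open>i\<close>, with \<open>c = f w\<close> and \<open>S = f ` N(w)\<close>.\<close>

definition dist_profile :: "nat \<Rightarrow> nat set \<Rightarrow> nat \<Rightarrow> nat" where
  "dist_profile c S i = (if i = c then 0 else if i \<in> S then 1 else 2)"

lemma dist_profile_eq_iff:
  assumes "c \<in> K" "d \<in> K" "S \<subseteq> K" "T \<subseteq> K" "c \<notin> S" "d \<notin> T"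
  shows "(\<forall>i\<in>K. dist_profile c S i = dist_profile d T i) \<longleftrightarrow> c = d \<and> S = T"
proof
  assume eq: "\<forall>i\<in>K. dist_profile c S i = dist_profile d T i"
  then have "dist_profile d T c = 0" using assms(1) by (metis dist_profile_def)
  then have "c = d" by (simp add: dist_profile_def split: if_splits)
  moreover have "i \<in> S \<longleftrightarrow> i \<in> T" for i
    using eq[rule_format, of i] assms \<open>c = d\<close> by (cases "i \<in> K") (auto simp: dist_profile_def split: if_splits)
  then have "S = T" by blast
  ultimately show "c = d \<and> S = T" ..
qed simp

lemma color_code_diameter_le_2:
  assumes diam: "diameter_le_2 V E" and "finite V" and f: "proper_coloring V E k f" and w: "w \<in> V"
  shows "color_code V E k f w = map (dist_profile (f w) (f ` nbhd V E w)) [1..<k+1]"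
proof -
  have "set_dist V E w {x \<in> V. f x = i} = dist_profile (f w) (f ` nbhd V E w) i" if "i \<in> {1..k}" for i
  proof -
    have "i \<in> f ` V" using that f by (simp add: proper_coloring_def)
    then have "{x \<in> V. f x = i} \<noteq> {}" by blast
    moreover have "(\<exists>x\<in>{x \<in> V. f x = i}. E w x) \<longleftrightarrow> i \<in> f ` nbhd V E w"
      by (auto simp: nbhd_def)
    ultimately show ?thesis
      using set_dist_diameter_le_2[OF diam \<open>finite V\<close> w] w by (auto simp: dist_profile_def)
  qed
  then show ?thesis unfolding color_code_def by (intro map_cong) auto
qed

lemma locating_coloring_iff_neighbor_locating_coloring:
  assumes diam: "diameter_le_2 V E" and "finite V"
  shows "locating_coloring V E k f \<longleftrightarrow> neighbor_locating_coloring V E k f"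
proof -
  have "color_code V E k f u = color_code V E k f v \<longleftrightarrow> f u = f v \<and> f ` nbhd V E u = f ` nbhd V E v"
    if f: "proper_coloring V E k f" and u: "u \<in> V" and v: "v \<in> V" for u v
  proof -
    have onto: "f ` V = {1..k}" and proper: "\<forall>a\<in>V. \<forall>b\<in>V. E a b \<longrightarrow> f a \<noteq> f b"
      using f by (simp_all add: proper_coloring_def)
    have palette: "f w \<in> {1..k}" "f ` nbhd V E w \<subseteq> {1..k}" "f w \<notin> f ` nbhd V E w"
      if "w \<in> V" for w
      using that onto proper unfolding nbhd_def by blast+
    have "set [1..<k+1] = {1..k}" by auto
    then show ?thesis
      unfolding color_code_diameter_le_2[OF diam \<open>finite V\<close> f u]
        color_code_diameter_le_2[OF diam \<open>finite V\<close> f v] map_eq_conv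
      using dist_profile_eq_iff[OF palette(1)[OF u] palette(1)[OF v] palette(2)[OF u]
          palette(2)[OF v] palette(3)[OF u] palette(3)[OF v]]
      by (simp only:)
  qed
  then show ?thesis
    unfolding locating_coloring_def neighbor_locating_coloring_def by blast
qed

lemma chi_L_eq_chi_L2:
  assumes "diameter_le_2 V E" and "finite V"
  shows "chi_L V E = chi_L2 V E"
  unfolding chi_L_def chi_L2_def locating_coloring_iff_neighbor_locating_coloring[OF assms] ..

definition neighbor_locating :: "'a set \<Rightarrow> ('a \<Rightarrow> 'a \<Rightarrow> bool) \<Rightarrow> ('a \<Rightarrow> 'c) \<Rightarrow> bool" where
  "neighbor_locating V E f \<longleftrightarrow>
     (\<forall>u\<in>V. \<forall>v\<in>V. E u v \<longrightarrow> f u \<noteq> f v) \<and>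
     (\<forall>u\<in>V. \<forall>v\<in>V. u \<noteq> v \<and> f u = f v \<longrightarrow> f ` nbhd V E u \<noteq> f ` nbhd V E v)"

lemma neighbor_locating_coloring_iff:
  "neighbor_locating_coloring V E k f \<longleftrightarrow> f ` V = {1..k} \<and> neighbor_locating V E f"
  unfolding neighbor_locating_coloring_def proper_coloring_def neighbor_locating_def by blast

lemma neighbor_locating_comp:
  assumes f: "neighbor_locating V E f" and h: "inj_on h (f ` V)"
  shows "neighbor_locating V E (h \<circ> f)"
proof -
  have "f ` nbhd V E w \<subseteq> f ` V" for w by (auto simp: nbhd_def)
  then have nbhd_colours: "(h \<circ> f) ` nbhd V E u = (h \<circ> f) ` nbhd V E v \<longleftrightarrow>
      f ` nbhd V E u = f ` nbhd V E v" for u v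
    using inj_on_image_eq_iff[OF h] by (simp only: image_comp[symmetric])
  have colours: "(h \<circ> f) u = (h \<circ> f) v \<longleftrightarrow> f u = f v" if "u \<in> V" "v \<in> V" for u v
    using inj_on_eq_iff[OF h] that by simp
  show ?thesis
    unfolding neighbor_locating_def
  proof (intro conjI ballI impI)
    fix u v assume "u \<in> V" "v \<in> V"
    then show "(h \<circ> f) u \<noteq> (h \<circ> f) v" if "E u v"
      using f that colours by (simp add: neighbor_locating_def)
    show "(h \<circ> f) ` nbhd V E u \<noteq> (h \<circ> f) ` nbhd V E v" if "u \<noteq> v \<and> (h \<circ> f) u = (h \<circ> f) v"
      using f that colours[OF \<open>u \<in> V\<close> \<open>v \<in> V\<close>] \<open>u \<in> V\<close> \<open>v \<in> V\<close>
      unfolding nbhd_colours by (simp add: neighbor_locating_def)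
  qed
qed

lemma neighbor_locating_coloring_card_image:
  assumes "finite V" and f: "neighbor_locating V E f"
  shows "\<exists>g. neighbor_locating_coloring V E (card (f ` V)) g"
proof -
  obtain h where h: "bij_betw h (f ` V) {1..card (f ` V)}"
    using finite_same_card_bij[of "f ` V" "{1..card (f ` V)}"] \<open>finite V\<close> by auto
  then have "(h \<circ> f) ` V = {1..card (f ` V)}"
    by (simp add: bij_betw_def image_comp)
  moreover have "neighbor_locating V E (h \<circ> f)"
    using neighbor_locating_comp[OF f bij_betw_imp_inj_on[OF h]] .
  ultimately have "neighbor_locating_coloring V E (card (f ` V)) (h \<circ> f)"
    unfolding neighbor_locating_coloring_iff ..
  then show ?thesis by blast
qed

lemma chi_L2_le_card_image:
  assumes "finite V" and "neighbor_locating V E f"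
  shows "chi_L2 V E \<le> card (f ` V)"
  unfolding chi_L2_def using neighbor_locating_coloring_card_image[OF assms] by (rule Least_le)

lemma chi_L2_attained:
  assumes "simple_graph V E"
  shows "\<exists>f. neighbor_locating_coloring V E (chi_L2 V E) f"
proof -
  have "finite V" and "neighbor_locating V E id"
    using assms by (auto simp: neighbor_locating_def simple_graph_def)
  then have "\<exists>k f. neighbor_locating_coloring V E k f"
    using neighbor_locating_coloring_card_image[of V E id] by blast
  then show ?thesis unfolding chi_L2_def by (rule LeastI_ex)
qed

text \<open>The common part \<open>R\<close> of the neighbourhoods cannot help to separate two vertices, so
separation must already happen inside \<open>\<phi> ` V\<close>.\<close>

lemma neighbor_locating_pullback:
  assumes f: "neighbor_locating V' E' f" and "inj_on \<phi> V" and "\<phi> ` V \<subseteq> V'"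
    and nbhd: "\<And>u. u \<in> V \<Longrightarrow> nbhd V' E' (\<phi> u) = \<phi> ` nbhd V E u \<union> R"
  shows "neighbor_locating V E (f \<circ> \<phi>)"
  unfolding neighbor_locating_def
proof (intro conjI ballI impI)
  fix u v assume uv: "u \<in> V" "v \<in> V"
  then have \<phi>uv: "\<phi> u \<in> V'" "\<phi> v \<in> V'" using \<open>\<phi> ` V \<subseteq> V'\<close> by auto
  show "(f \<circ> \<phi>) u \<noteq> (f \<circ> \<phi>) v" if "E u v"
  proof -
    have "\<phi> v \<in> nbhd V' E' (\<phi> u)" using nbhd[OF uv(1)] uv that by (auto simp: nbhd_def)
    then have "E' (\<phi> u) (\<phi> v)" by (simp add: nbhd_def)
    then show ?thesis using f \<phi>uv by (simp add: neighbor_locating_def)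
  qed
  show "(f \<circ> \<phi>) ` nbhd V E u \<noteq> (f \<circ> \<phi>) ` nbhd V E v" if "u \<noteq> v \<and> (f \<circ> \<phi>) u = (f \<circ> \<phi>) v"
  proof
    assume same: "(f \<circ> \<phi>) ` nbhd V E u = (f \<circ> \<phi>) ` nbhd V E v"
    have "\<phi> u \<noteq> \<phi> v" using that uv \<open>inj_on \<phi> V\<close> by (meson inj_onD)
    then have "f ` nbhd V' E' (\<phi> u) \<noteq> f ` nbhd V' E' (\<phi> v)"
      using f \<phi>uv that by (simp add: neighbor_locating_def)
    moreover have "f ` nbhd V' E' (\<phi> u) = f ` nbhd V' E' (\<phi> v)"
      using same by (simp add: nbhd uv image_Un image_comp)
    ultimately show False by contradiction
  qed
qed

lemma finite_join_vertices:
  "finite V1 \<Longrightarrow> finite V2 \<Longrightarrow> finite (join_vertices V1 V2)"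
  by (simp add: join_vertices_def)

lemma join_diameter_le_2:
  assumes "V1 \<noteq> {}" and "V2 \<noteq> {}"
  shows "diameter_le_2 (join_vertices V1 V2) (join_edges V1 E1 V2 E2)"
proof -
  obtain a b where "a \<in> V1" "b \<in> V2" using assms by blast
  then show ?thesis
    unfolding diameter_le_2_def join_vertices_def
    by (auto intro: bexI[of _ "Inl a"] bexI[of _ "Inr b"])
qed

lemma nbhd_join_Inl:
  assumes "simple_graph V1 E1" and "x \<in> V1"
  shows "nbhd (join_vertices V1 V2) (join_edges V1 E1 V2 E2) (Inl x) = Inl ` nbhd V1 E1 x \<union> Inr ` V2"
  using assms by (auto simp: nbhd_def join_vertices_def simple_graph_def)

lemma nbhd_join_Inr:
  assumes "simple_graph V2 E2" and "y \<in> V2"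
  shows "nbhd (join_vertices V1 V2) (join_edges V1 E1 V2 E2) (Inr y) = Inl ` V1 \<union> Inr ` nbhd V2 E2 y"
  using assms by (auto simp: nbhd_def join_vertices_def simple_graph_def)

lemma neighbor_locating_join:
  assumes g1: "simple_graph V1 E1" and g2: "simple_graph V2 E2"
    and f1: "neighbor_locating V1 E1 f1" and f2: "neighbor_locating V2 E2 f2"
    and disjoint: "f1 ` V1 \<inter> f2 ` V2 = {}"
  shows "neighbor_locating (join_vertices V1 V2) (join_edges V1 E1 V2 E2) (case_sum f1 f2)"
proof -
  let ?V = "join_vertices V1 V2" and ?E = "join_edges V1 E1 V2 E2" and ?f = "case_sum f1 f2"
  have img_Inl: "?f ` nbhd ?V ?E (Inl x) = f1 ` nbhd V1 E1 x \<union> f2 ` V2" if "x \<in> V1" for x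
    unfolding nbhd_join_Inl[OF g1 that] by (simp add: image_Un image_image)
  have img_Inr: "?f ` nbhd ?V ?E (Inr y) = f2 ` nbhd V2 E2 y \<union> f1 ` V1" if "y \<in> V2" for y
    unfolding nbhd_join_Inr[OF g2 that] by (auto simp: image_Un image_image)
  have disjoint_nbhd: "f1 ` nbhd V1 E1 x \<inter> f2 ` V2 = {}" "f2 ` nbhd V2 E2 y \<inter> f1 ` V1 = {}" for x y
    using disjoint by (auto simp: nbhd_def)
  have Un_cancel: "A \<union> C \<noteq> B \<union> C" if "A \<noteq> B" "A \<inter> C = {}" "B \<inter> C = {}" for A B C :: "'c set"
    using that by blast
  have sides: "?f (Inl x) \<noteq> ?f (Inr y)" "?f (Inr y) \<noteq> ?f (Inl x)" if "x \<in> V1" "y \<in> V2" for x y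
    using disjoint that by auto
  have proper: "?f u \<noteq> ?f v" if "u \<in> ?V" "v \<in> ?V" "?E u v" for u v
  proof -
    have "\<forall>x\<in>V1. \<forall>y\<in>V1. E1 x y \<longrightarrow> f1 x \<noteq> f1 y" "\<forall>x\<in>V2. \<forall>y\<in>V2. E2 x y \<longrightarrow> f2 x \<noteq> f2 y"
      using f1 f2 by (simp_all add: neighbor_locating_def)
    with that sides show ?thesis by (cases u; cases v) (auto simp: join_vertices_def)
  qed
  have locating: "?f ` nbhd ?V ?E u \<noteq> ?f ` nbhd ?V ?E v"
    if "u \<in> ?V" "v \<in> ?V" "u \<noteq> v" "?f u = ?f v" for u v
  proof (cases u; cases v)
    fix x y assume uv: "u = Inl x" "v = Inl y"
    then have "x \<in> V1" "y \<in> V1" using that by (auto simp: join_vertices_def)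
    then have "f1 ` nbhd V1 E1 x \<noteq> f1 ` nbhd V1 E1 y"
      using f1 that uv by (simp add: neighbor_locating_def)
    then show ?thesis
      unfolding uv img_Inl[OF \<open>x \<in> V1\<close>] img_Inl[OF \<open>y \<in> V1\<close>]
      by (rule Un_cancel[OF _ disjoint_nbhd(1) disjoint_nbhd(1)])
  next
    fix x y assume "u = Inl x" "v = Inr y"
    then show ?thesis using that sides by (auto simp: join_vertices_def)
  next
    fix x y assume "u = Inr x" "v = Inl y"
    then show ?thesis using that sides by (auto simp: join_vertices_def)
  next
    fix x y assume uv: "u = Inr x" "v = Inr y"
    then have "x \<in> V2" "y \<in> V2" using that by (auto simp: join_vertices_def)
    then have "f2 ` nbhd V2 E2 x \<noteq> f2 ` nbhd V2 E2 y"
      using f2 that uv by (simp add: neighbor_locating_def)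
    then show ?thesis
      unfolding uv img_Inr[OF \<open>x \<in> V2\<close>] img_Inr[OF \<open>y \<in> V2\<close>]
      by (rule Un_cancel[OF _ disjoint_nbhd(2) disjoint_nbhd(2)])
  qed
  show ?thesis using proper locating by (simp add: neighbor_locating_def)
qed

lemma neighbor_locating_coloring_join:
  assumes g1: "simple_graph V1 E1" and g2: "simple_graph V2 E2"
    and f1: "neighbor_locating_coloring V1 E1 a f1" and f2: "neighbor_locating_coloring V2 E2 b f2"
  shows "neighbor_locating_coloring (join_vertices V1 V2) (join_edges V1 E1 V2 E2) (a + b)
           (case_sum f1 (\<lambda>y. a + f2 y))"
proof -
  have palette1: "f1 ` V1 = {1..a}" and nl1: "neighbor_locating V1 E1 f1"
    using f1 by (simp_all add: neighbor_locating_coloring_iff)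
  have "f2 ` V2 = {1..b}" and "neighbor_locating V2 E2 f2"
    using f2 by (simp_all add: neighbor_locating_coloring_iff)
  then have palette2: "(\<lambda>y. a + f2 y) ` V2 = {a+1..a+b}"
    and nl2: "neighbor_locating V2 E2 (\<lambda>y. a + f2 y)"
    using neighbor_locating_comp[of V2 E2 f2 "plus a"]
    by (simp_all add: image_image[symmetric] comp_def)
  have "case_sum f1 (\<lambda>y. a + f2 y) ` join_vertices V1 V2 = {1..a} \<union> {a+1..a+b}"
    unfolding join_vertices_def image_Un image_image palette1[symmetric] palette2[symmetric] by simp
  also have "\<dots> = {1..a+b}" by auto
  finally show ?thesis
    using neighbor_locating_join[OF g1 g2 nl1 nl2] palette1 palette2
    by (simp add: neighbor_locating_coloring_iff)
qed

lemma chi_L2_join_le: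
  assumes g1: "simple_graph V1 E1" and g2: "simple_graph V2 E2"
    and f: "neighbor_locating_coloring (join_vertices V1 V2) (join_edges V1 E1 V2 E2) k f"
  shows "chi_L2 V1 E1 + chi_L2 V2 E2 \<le> k"
proof -
  have palette: "f ` Inl ` V1 \<union> f ` Inr ` V2 = {1..k}"
    and nl: "neighbor_locating (join_vertices V1 V2) (join_edges V1 E1 V2 E2) f"
    using f by (simp_all add: neighbor_locating_coloring_iff join_vertices_def image_Un)
  have "neighbor_locating V1 E1 (f \<circ> Inl)"
    by (rule neighbor_locating_pullback[OF nl, where R = "Inr ` V2"])
      (simp_all add: nbhd_join_Inl[OF g1], auto simp: join_vertices_def)
  then have left: "chi_L2 V1 E1 \<le> card (f ` Inl ` V1)"
    using chi_L2_le_card_image g1 by (metis image_comp simple_graph_def)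
  have "neighbor_locating V2 E2 (f \<circ> Inr)"
    by (rule neighbor_locating_pullback[OF nl, where R = "Inl ` V1"])
      (simp_all add: nbhd_join_Inr[OF g2] Un_commute, auto simp: join_vertices_def)
  then have right: "chi_L2 V2 E2 \<le> card (f ` Inr ` V2)"
    using chi_L2_le_card_image g2 by (metis image_comp simple_graph_def)
  have "f (Inl x) \<noteq> f (Inr y)" if "x \<in> V1" "y \<in> V2" for x y
    using nl that by (auto simp: neighbor_locating_def join_vertices_def)
  then have "f ` Inl ` V1 \<inter> f ` Inr ` V2 = {}" by blast
  moreover have "finite V1" "finite V2" using g1 g2 by (simp_all add: simple_graph_def)
  ultimately have "card (f ` Inl ` V1) + card (f ` Inr ` V2) = k"
    using card_Un_disjoint palette by (metis card_atLeastAtMost diff_Suc_1 finite_imageI)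
  with left right show ?thesis by linarith
qed

lemma chi_L2_join:
  assumes "simple_graph V1 E1" and "simple_graph V2 E2"
  shows "chi_L2 (join_vertices V1 V2) (join_edges V1 E1 V2 E2) = chi_L2 V1 E1 + chi_L2 V2 E2"
  unfolding chi_L2_def[of "join_vertices V1 V2"]
proof (rule Least_equality)
  obtain f1 f2 where "neighbor_locating_coloring V1 E1 (chi_L2 V1 E1) f1"
    and "neighbor_locating_coloring V2 E2 (chi_L2 V2 E2) f2"
    using chi_L2_attained[OF assms(1)] chi_L2_attained[OF assms(2)] by blast
  then show "\<exists>f. neighbor_locating_coloring (join_vertices V1 V2) (join_edges V1 E1 V2 E2)
      (chi_L2 V1 E1 + chi_L2 V2 E2) f"
    using neighbor_locating_coloring_join[OF assms] by blast
qed (use chi_L2_join_le[OF assms] in blast)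

theorem theorem1:
  fixes V1 :: "'a set" and E1 :: "'a \<Rightarrow> 'a \<Rightarrow> bool"
    and V2 :: "'b set" and E2 :: "'b \<Rightarrow> 'b \<Rightarrow> bool"
  assumes "simple_graph V1 E1" and "simple_graph V2 E2"
  shows "chi_L (join_vertices V1 V2) (join_edges V1 E1 V2 E2) = chi_L2 V1 E1 + chi_L2 V2 E2"
proof -
  have "V1 \<noteq> {}" "V2 \<noteq> {}" "finite V1" "finite V2"
    using assms by (simp_all add: simple_graph_def)
  then have "chi_L (join_vertices V1 V2) (join_edges V1 E1 V2 E2) =
      chi_L2 (join_vertices V1 V2) (join_edges V1 E1 V2 E2)"
    by (intro chi_L_eq_chi_L2 join_diameter_le_2 finite_join_vertices)
  also have "\<dots> = chi_L2 V1 E1 + chi_L2 V2 E2"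
    by (rule chi_L2_join[OF assms])
  finally show ?thesis .
qed

end
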